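(* For all $q\ge 4$ and all integers $n\ge 1$, $\kappa^{\min}_{n,q}\ge \lfloor n/2-\log_q(n)\rfloor$.
   Context: Let $q\ge 2$, $A=\{0,1,\dots,q-1\}$, $[n]=\{1,\dots,n\}$, and let $F(n,q)$ be the set of all maps $A^n\to A^n$. For $f\in F(m,q)$ and $i\in[m]$, $f_i$ is the $i$-th coordinate function and $f^i(x)=(x_1,\dots,x_{i-1},f_i(x),x_{i+1},\dots,x_m)$; for a word $w=(w_1,\dots,w_t)$ over $[m]$, $f^w=f^{w_t}\circ\cdots\circ f^{w_1}$. $\Pi([m])$ is the set of permutations of $[m]$ written as words $(w_1,\dots,w_m)$. $\mathrm{pr}_{[n]}:A^m\to A^n$ is the projection onto the first $n$ coordinates. For $m\ge n$, $(f,w)$ with $f\in F(m,q)$, $w\in\Pi([m])$ sequentializes $h\in F(n,q)$ if $\mathrm{pr}_{[n]}\circ f^w=h\circ\mathrm{pr}_{[n]}$. $\kappa^{\min}(h)$ is the smallest $k\ge 0$ such that there exist $f\in F(n+k,q)$ and $w\in\Pi([n+k])$ with $(f,w)$ sequentializing $h$, and $\kappa^{\min}_{n,q}=\max\{\kappa^{\min}(h): h\in F(n,q)\}$. *)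

theory Defs
  imports Complex_Main "HOL-Library.FuncSet"
begin

text \<open>Elements of A^n, A = {0,...,q-1}, as lists of length n; coordinates are 0-based.\<close>
definition states :: "nat \<Rightarrow> nat \<Rightarrow> nat list set" where
  "states q n = {x. length x = n \<and> set x \<subseteq> {..<q}}"

definition upd_coord :: "(nat list \<Rightarrow> nat list) \<Rightarrow> nat \<Rightarrow> nat list \<Rightarrow> nat list" where
  "upd_coord f i x = x[i := (f x) ! i]"

text \<open>f^w = f^{w_t} o ... o f^{w_1} (w_1 applied first).\<close>
definition seq_update :: "(nat list \<Rightarrow> nat list) \<Rightarrow> nat list \<Rightarrow> nat list \<Rightarrow> nat list" where
  "seq_update f w = fold (\<lambda>i. upd_coord f i) w"

definition is_perm_word :: "nat \<Rightarrow> nat list \<Rightarrow> bool" where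
  "is_perm_word m w \<longleftrightarrow> distinct w \<and> set w = {..<m}"

definition sequentializes ::
  "nat \<Rightarrow> nat \<Rightarrow> nat \<Rightarrow> (nat list \<Rightarrow> nat list) \<Rightarrow> nat list \<Rightarrow> (nat list \<Rightarrow> nat list) \<Rightarrow> bool" where
  "sequentializes q n m f w h \<longleftrightarrow>
     n \<le> m \<and> f \<in> states q m \<rightarrow> states q m \<and> is_perm_word m w \<and>
     (\<forall>x\<in>states q m. take n (seq_update f w x) = h (take n x))"

definition kappa_min :: "nat \<Rightarrow> nat \<Rightarrow> (nat list \<Rightarrow> nat list) \<Rightarrow> nat" where
  "kappa_min q n h = (LEAST k. \<exists>f w. sequentializes q n (n + k) f w h)"

text \<open>F(n,q): maps A^n -> A^n, represented extensionally.\<close>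
definition kappa_min_nq :: "nat \<Rightarrow> nat \<Rightarrow> nat" where
  "kappa_min_nq n q = Max ((kappa_min q n) ` (states q n \<rightarrow>\<^sub>E states q n))"

end

theory Submission
  imports Defs "HOL-Library.Disjoint_Sets"
begin

(*
  Split the update order as w = w1 @ w2 so that w1 touches exactly K of the original coordinates,
  and let A be the set of these K coordinates. Run w1 on an input padded with zeros:
  afterwards the coordinates in A already hold their final values (w2 never touches them again),
  while the other original coordinates still hold the input. So on a set P of inputs that agree
  outside A and on which h is injective but constant on A, the state after w1 is determined by the
  k auxiliary coordinates, and |P| <= q^k.

  Conversely, a greedy averaging argument places such sets P_A of size > q^(K-1), pairwise disjoint,
  into A-cylinders for all K-subsets A at once, as long as 2^n q^(K+1) < (q-1) q^n, which holds for
  K <= n/2 - log_q n. Mapping each P_A injectively to vectors vanishing on A (there is room since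
  2K <= n) yields an h that needs at least K auxiliary coordinates.
*)

lemma states_eq_lists: "states q n = {xs. set xs \<subseteq> {..<q} \<and> length xs = n}"
  by (auto simp: states_def)

lemma finite_states: "finite (states q n)"
  by (simp add: states_eq_lists finite_lists_length_eq)

lemma card_states: "card (states q n) = q ^ n"
  by (simp add: states_eq_lists card_lists_length_eq)

lemma states_nth_less: "x \<in> states q n \<Longrightarrow> j < n \<Longrightarrow> x ! j < q"
  unfolding states_def using nth_mem by fastforce

lemma states_iff_nth: "x \<in> states q n \<longleftrightarrow> length x = n \<and> (\<forall>j<n. x ! j < q)"
  by (auto simp: states_def set_conv_nth)

lemma replicate_zero_in_states: "q > 0 \<Longrightarrow> replicate n 0 \<in> states q n"
  by (auto simp: states_def)

lemma length_upd_coord [simp]: "length (upd_coord f i x) = length x"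
  by (simp add: upd_coord_def)

lemma upd_coord_in_states:
  assumes "f \<in> states q m \<rightarrow> states q m" "x \<in> states q m"
  shows "upd_coord f i x \<in> states q m"
proof -
  have "f x ! i < q" if "i < m"
    using assms states_nth_less that by blast
  then show ?thesis
    using assms(2) by (cases "i < m") (auto simp: states_iff_nth upd_coord_def nth_list_update)
qed

lemma length_seq_update [simp]: "length (seq_update f w x) = length x"
  by (induction w arbitrary: x) (auto simp: seq_update_def)

lemma seq_update_append: "seq_update f (w1 @ w2) x = seq_update f w2 (seq_update f w1 x)"
  by (simp add: seq_update_def)

lemma seq_update_snoc: "seq_update f (w @ [i]) x = upd_coord f i (seq_update f w x)"
  by (simp add: seq_update_def)

lemma seq_update_nth_notin: "j \<notin> set w \<Longrightarrow> seq_update f w x ! j = x ! j"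
  by (induction w arbitrary: x) (simp_all add: seq_update_def upd_coord_def)

lemma seq_update_in_states:
  assumes "f \<in> states q m \<rightarrow> states q m" "x \<in> states q m"
  shows "seq_update f w x \<in> states q m"
  using assms(2)
  by (induction w arbitrary: x) (simp_all add: seq_update_def upd_coord_in_states[OF assms(1)])

lemma sequentializes_by_copying:
  assumes h: "h \<in> states q n \<rightarrow> states q n"
  shows "\<exists>f w. sequentializes q n (n + n) f w h"
proof -
  define f where "f y = map (\<lambda>i. if i < n then h (drop n y) ! i else y ! (i - n)) [0..<n + n]" for y
  have copy_phase: "seq_update f [n..<n + j] x ! p = (if n \<le> p \<and> p < n + j then x ! (p - n) else x ! p)"
    if "j \<le> n" "length x = n + n" for j x p
    using that
  proof (induction j arbitrary: p)
    case (Suc j)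
    let ?y = "seq_update f [n..<n + j] x"
    have "?y ! j = x ! j"
      using Suc by simp
    then have "f ?y ! (n + j) = x ! j"
      using Suc.prems by (simp add: f_def)
    then show ?case
      using Suc by (auto simp: seq_update_snoc upd_coord_def nth_list_update)
  qed (simp add: seq_update_def)
  have apply_phase: "seq_update f [0..<j] y ! p = (if p < j then h (drop n y) ! p else y ! p)"
    if "j \<le> n" "length y = n + n" for j y p
    using that
  proof (induction j arbitrary: p)
    case (Suc j)
    let ?z = "seq_update f [0..<j] y"
    have "drop n ?z = drop n y"
      by (rule nth_equalityI) (use Suc in auto)
    then have "f ?z ! j = h (drop n y) ! j"
      using Suc.prems by (simp add: f_def)
    then show ?case
      using Suc by (auto simp: seq_update_snoc upd_coord_def nth_list_update)
  qed (simp add: seq_update_def)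
  have "f \<in> states q (n + n) \<rightarrow> states q (n + n)"
  proof
    fix y assume y: "y \<in> states q (n + n)"
    then have "drop n y \<in> states q n"
      by (auto simp: states_def dest: in_set_dropD)
    then have "h (drop n y) \<in> states q n"
      using h by blast
    then show "f y \<in> states q (n + n)"
      using y by (auto simp: f_def states_iff_nth states_nth_less)
  qed
  moreover have "take n (seq_update f ([n..<n + n] @ [0..<n]) x) = h (take n x)"
    if x: "x \<in> states q (n + n)" for x
  proof -
    let ?y = "seq_update f [n..<n + n] x"
    have "drop n ?y = take n x"
      using x by (intro nth_equalityI) (auto simp: states_def copy_phase)
    moreover have "take n x \<in> states q n"
      using x by (auto simp: states_def dest: in_set_takeD)
    then have "length (h (take n x)) = n"
      using h by (auto simp: Pi_iff states_def)
    ultimately show ?thesis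
    proof (intro nth_equalityI)
      fix i assume "i < length (take n (seq_update f ([n..<n + n] @ [0..<n]) x))"
      then have "i < n"
        using x by (simp add: states_def)
      then show "take n (seq_update f ([n..<n + n] @ [0..<n]) x) ! i = h (take n x) ! i"
        using x apply_phase[of n ?y i] \<open>drop n ?y = take n x\<close>
        by (simp add: seq_update_append states_def)
    qed (use x in \<open>simp add: states_def\<close>)
  qed
  moreover have "is_perm_word (n + n) ([n..<n + n] @ [0..<n])"
    by (auto simp: is_perm_word_def)
  ultimately have "sequentializes q n (n + n) f ([n..<n + n] @ [0..<n]) h"
    unfolding sequentializes_def by simp
  then show ?thesis
    by blast
qed

definition cylinder :: "nat \<Rightarrow> nat \<Rightarrow> nat set \<Rightarrow> nat list \<Rightarrow> nat list set" where
  "cylinder q n A c = {y \<in> states q n. \<forall>j<n. j \<notin> A \<longrightarrow> y ! j = c ! j}"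

lemma cylinder_subset_states: "cylinder q n A c \<subseteq> states q n"
  by (auto simp: cylinder_def)

lemma finite_cylinder: "finite (cylinder q n A c)"
  using cylinder_subset_states finite_states by (rule finite_subset)

lemma cylinder_commute:
  "u \<in> states q n \<Longrightarrow> c \<in> states q n \<Longrightarrow> u \<in> cylinder q n A c \<longleftrightarrow> c \<in> cylinder q n A u"
  by (auto simp: cylinder_def)

lemma card_cylinder:
  assumes c: "c \<in> states q n" and A: "A \<subseteq> {..<n}"
  shows "card (cylinder q n A c) = q ^ card A"
proof -
  define F where "F g = map (\<lambda>j. if j \<in> A then g j else c ! j) [0..<n]" for g
  have "cylinder q n A c = F ` (A \<rightarrow>\<^sub>E {..<q})"
  proof
    show "cylinder q n A c \<subseteq> F ` (A \<rightarrow>\<^sub>E {..<q})"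
    proof
      fix y assume y: "y \<in> cylinder q n A c"
      then have "y = F (restrict (\<lambda>j. y ! j) A)"
        by (intro nth_equalityI) (auto simp: F_def cylinder_def states_def)
      moreover have "restrict (\<lambda>j. y ! j) A \<in> A \<rightarrow>\<^sub>E {..<q}"
        using y A states_nth_less by (fastforce simp: cylinder_def)
      ultimately show "y \<in> F ` (A \<rightarrow>\<^sub>E {..<q})" by blast
    qed
    show "F ` (A \<rightarrow>\<^sub>E {..<q}) \<subseteq> cylinder q n A c"
      using c by (auto simp: F_def cylinder_def states_iff_nth states_nth_less)
  qed
  moreover have "inj_on F (A \<rightarrow>\<^sub>E {..<q})"
  proof (rule inj_onI)
    fix g g' assume "g \<in> A \<rightarrow>\<^sub>E {..<q}" "g' \<in> A \<rightarrow>\<^sub>E {..<q}" "F g = F g'"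
    then show "g = g'"
      using A by (intro PiE_ext) (force simp: F_def)+
  qed
  moreover have "finite A"
    using A finite_subset by blast
  ultimately show ?thesis
    by (simp add: card_image card_PiE)
qed

definition collapses_cylinders :: "nat \<Rightarrow> nat \<Rightarrow> nat \<Rightarrow> (nat list \<Rightarrow> nat list) \<Rightarrow> bool" where
  "collapses_cylinders q n K h \<longleftrightarrow> (\<forall>A. A \<subseteq> {..<n} \<longrightarrow> card A = K \<longrightarrow> (\<exists>c P. P \<subseteq> cylinder q n A c \<and>
     q ^ (K - 1) < card P \<and> inj_on h P \<and> (\<forall>x\<in>P. \<forall>y\<in>P. \<forall>j\<in>A. h x ! j = h y ! j)))"

lemma card_le_power_extra_coordinates:
  assumes seq: "sequentializes q n (n + k) f (w1 @ w2) h"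
    and q: "q > 0"
    and P: "P \<subseteq> cylinder q n {j \<in> set w1. j < n} c"
    and const: "\<And>x y j. x \<in> P \<Longrightarrow> y \<in> P \<Longrightarrow> j \<in> set w1 \<Longrightarrow> j < n \<Longrightarrow> h x ! j = h y ! j"
    and inj: "inj_on h P"
  shows "card P \<le> q ^ k"
proof -
  have f: "f \<in> states q (n + k) \<rightarrow> states q (n + k)" and dist: "distinct (w1 @ w2)"
    and correct: "\<And>x. x \<in> states q (n + k) \<Longrightarrow> take n (seq_update f (w1 @ w2) x) = h (take n x)"
    using seq by (auto simp: sequentializes_def is_perm_word_def)
  define s where "s x = seq_update f w1 (x @ replicate k 0)" for x
  have x_states: "x \<in> states q n" if "x \<in> P" for x
    using that P cylinder_subset_states by blast
  have padded_states: "x @ replicate k 0 \<in> states q (n + k)" if "x \<in> P" for x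
    using x_states[OF that] q by (auto simp: states_def)
  have s_states: "s x \<in> states q (n + k)" if "x \<in> P" for x
    unfolding s_def using f padded_states[OF that] by (rule seq_update_in_states)
  have s_correct: "take n (seq_update f w2 (s x)) = h x" if "x \<in> P" for x
    using correct[OF padded_states[OF that]] x_states[OF that]
    by (simp add: s_def seq_update_append states_def)
  have s_nth: "s x ! j = s y ! j" if "x \<in> P" "y \<in> P" "j < n" for x y j
  proof (cases "j \<in> set w1")
    case True
    then have "j \<notin> set w2"
      using dist by auto
    have "s u ! j = h u ! j" if "u \<in> P" for u
    proof -
      have "s u ! j = take n (seq_update f w2 (s u)) ! j"
        using \<open>j \<notin> set w2\<close> \<open>j < n\<close> by (simp add: seq_update_nth_notin)
      then show ?thesis
        using s_correct[OF that] by simp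
    qed
    then show ?thesis
      using that True const[of x y j] by simp
  next
    case False
    have "s u ! j = c ! j" if "u \<in> P" for u
      using that P x_states[OF that] False \<open>j < n\<close>
      by (auto simp: s_def seq_update_nth_notin nth_append states_def cylinder_def)
    then show ?thesis
      using that by simp
  qed
  have "inj_on (\<lambda>x. drop n (s x)) P"
  proof (rule inj_onI)
    fix x y assume x: "x \<in> P" and y: "y \<in> P" and eq: "drop n (s x) = drop n (s y)"
    have "take n (s x) = take n (s y)"
      using s_states[OF x] s_states[OF y] s_nth[OF x y]
      by (intro nth_equalityI) (auto simp: states_def)
    then have "s x = s y"
      using eq by (metis append_take_drop_id)
    then have "h x = h y"
      using s_correct[OF x] s_correct[OF y] by simp
    then show "x = y"
      using inj x y by (simp add: inj_on_def)
  qed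
  moreover have "(\<lambda>x. drop n (s x)) ` P \<subseteq> states q k"
    using s_states by (auto simp: states_def dest: in_set_dropD)
  ultimately have "card P \<le> card (states q k)"
    using finite_states by (rule card_inj_on_le)
  then show ?thesis
    by (simp add: card_states)
qed

lemma split_list_filter_length:
  "K \<le> length (filter p w) \<Longrightarrow> \<exists>w1 w2. w = w1 @ w2 \<and> length (filter p w1) = K"
proof (induction w arbitrary: K)
  case (Cons a w)
  show ?case
  proof (cases "K = 0")
    case True
    then have "a # w = [] @ (a # w) \<and> length (filter p []) = K"
      by simp
    then show ?thesis
      by blast
  next
    case False
    then have "(if p a then K - 1 else K) \<le> length (filter p w)"
      using Cons.prems by auto
    then obtain w1 w2 where "w = w1 @ w2" "length (filter p w1) = (if p a then K - 1 else K)"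
      using Cons.IH by blast
    then have "a # w = (a # w1) @ w2 \<and> length (filter p (a # w1)) = K"
      using False by auto
    then show ?thesis
      by blast
  qed
qed simp

lemma extra_coordinates_lower_bound:
  assumes q: "q > 0" and K: "K \<le> n"
    and hard: "collapses_cylinders q n K h"
    and seq: "sequentializes q n (n + k) f w h"
  shows "K \<le> k"
proof -
  have w: "distinct w" "set w = {..<n + k}"
    using seq unfolding sequentializes_def is_perm_word_def by blast+
  have "set (filter (\<lambda>j. j < n) w) = {..<n}"
    using w(2) by (simp add: set_eq_iff) linarith
  then have "K \<le> length (filter (\<lambda>j. j < n) w)"
    using K distinct_card[OF distinct_filter[OF w(1)], of "\<lambda>j. j < n"] by simp
  then obtain w1 w2 where w12: "w = w1 @ w2" and len: "length (filter (\<lambda>j. j < n) w1) = K"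
    using split_list_filter_length by blast
  define A where "A = {j \<in> set w1. j < n}"
  have "distinct w1"
    using w(1) w12 by simp
  have "card A = card (set (filter (\<lambda>j. j < n) w1))"
    by (simp add: A_def)
  also have "\<dots> = length (filter (\<lambda>j. j < n) w1)"
    using \<open>distinct w1\<close> by (intro distinct_card) simp
  also have "\<dots> = K"
    by (fact len)
  finally have card_A: "card A = K" .
  have A_sub: "A \<subseteq> {..<n}"
    by (auto simp: A_def)
  obtain c P where P: "P \<subseteq> cylinder q n A c" "q ^ (K - 1) < card P" "inj_on h P"
    "\<forall>x\<in>P. \<forall>y\<in>P. \<forall>j\<in>A. h x ! j = h y ! j"
    using hard[unfolded collapses_cylinders_def, rule_format, OF A_sub card_A] by blast
  have "card P \<le> q ^ k"
  proof (rule card_le_power_extra_coordinates)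
    show "sequentializes q n (n + k) f (w1 @ w2) h"
      using seq w12 by simp
    show "\<And>x y j. x \<in> P \<Longrightarrow> y \<in> P \<Longrightarrow> j \<in> set w1 \<Longrightarrow> j < n \<Longrightarrow> h x ! j = h y ! j"
      using P(4) unfolding A_def by blast
  qed (use q P(1,3) in \<open>simp_all add: A_def\<close>)
  then have "q ^ (K - 1) < q ^ k"
    using P(2) by linarith
  then have "K - 1 < k"
    using q by (cases "q = 1") (auto dest: power_less_imp_less_exp)
  then show ?thesis
    by linarith
qed

lemma exists_sparse_cylinder:
  assumes q: "q > 0" and U: "U \<subseteq> states q n" and A: "A \<subseteq> {..<n}"
  shows "\<exists>c\<in>states q n. card (cylinder q n A c \<inter> U) * q ^ n \<le> card U * q ^ card A"
proof -
  let ?S = "states q n"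
  define g where "g c = card (cylinder q n A c \<inter> U)" for c
  have finU: "finite U"
    using U finite_states finite_subset by blast
  have "(\<Sum>c\<in>?S. g c) = (\<Sum>c\<in>?S. \<Sum>u\<in>U. if u \<in> cylinder q n A c then 1 else 0)"
    using finU by (simp add: g_def sum.If_cases Int_commute)
  also have "\<dots> = (\<Sum>u\<in>U. \<Sum>c\<in>?S. if c \<in> cylinder q n A u then 1 else 0)"
    using U by (subst sum.swap) (intro sum.cong refl, auto simp: cylinder_commute)
  also have "\<dots> = (\<Sum>u\<in>U. card (cylinder q n A u))"
    using cylinder_subset_states finite_states
    by (intro sum.cong refl) (simp add: sum.If_cases Int_absorb1)
  also have "\<dots> = card U * q ^ card A"
    using U A by (simp add: card_cylinder subsetD)
  finally have total: "(\<Sum>c\<in>?S. g c) = card U * q ^ card A" .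
  obtain c where c: "c \<in> ?S" "\<And>c'. c' \<in> ?S \<Longrightarrow> g c \<le> g c'"
    using ex_has_least_nat[of "\<lambda>c. c \<in> ?S", OF replicate_zero_in_states[OF q], of g] by blast
  have "card ?S * g c \<le> (\<Sum>c\<in>?S. g c)"
    using c(2) sum_bounded_below[of ?S "g c" g] by simp
  then show ?thesis
    using c(1) total by (auto simp: g_def card_states mult.commute)
qed

lemma exists_large_cylinder_part_avoiding:
  assumes q: "q > 0" and A: "A \<subseteq> {..<n}" "card A \<ge> 1"
    and U: "U \<subseteq> states q n" and bound: "card U * q < (q - 1) * q ^ n"
  shows "\<exists>c\<in>states q n. q ^ (card A - 1) < card (cylinder q n A c - U)"
proof -
  obtain c where c: "c \<in> states q n" and sparse: "card (cylinder q n A c \<inter> U) * q ^ n \<le> card U * q ^ card A"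
    using exists_sparse_cylinder[OF q U A(1)] by blast
  define K where "K = card A - 1"
  define I where "I = card (cylinder q n A c \<inter> U)"
  have qK: "q ^ card A = q * q ^ K"
    using A(2) by (simp add: K_def power_Suc[symmetric])
  have "I * q * q ^ n \<le> card U * q * q ^ card A"
    using sparse by (simp add: I_def)
  also have "\<dots> < (q - 1) * q ^ n * q ^ card A"
    using bound q by simp
  also have "\<dots> = ((q - 1) * q ^ K * q) * q ^ n"
    by (simp only: qK mult_ac)
  finally have "I * q < (q - 1) * q ^ K * q"
    using mult_less_cancel2 by blast
  then have "I < (q - 1) * q ^ K"
    by (simp only: mult_less_cancel2)
  then have "q ^ K < q ^ card A - I"
    using q by (simp add: qK diff_mult_distrib)
  moreover have "card (cylinder q n A c - U) = q ^ card A - I"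
    using c A(1) finite_cylinder by (simp add: I_def card_Diff_subset_Int card_cylinder)
  ultimately have "q ^ (card A - 1) < card (cylinder q n A c - U)"
    by (simp add: K_def)
  then show ?thesis
    using c by blast
qed

lemma exists_cylinder_packing:
  assumes q: "q > 0" and K: "K \<ge> 1" and fin: "finite G"
    and G: "\<And>A. A \<in> G \<Longrightarrow> A \<subseteq> {..<n} \<and> card A = K"
    and bound: "card G * q ^ (K + 1) < (q - 1) * q ^ n"
  shows "\<exists>P. (\<forall>A\<in>G. \<exists>c\<in>states q n. P A \<subseteq> cylinder q n A c \<and> q ^ (K - 1) < card (P A))
    \<and> disjoint_family_on P G"
  using fin G bound
proof (induction G rule: finite_induct)
  case empty
  then show ?case
    by (simp add: disjoint_family_on_def)
next
  case (insert A G)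
  have "card G \<le> card (insert A G)"
    using insert.hyps(1) by (simp add: card_insert_le)
  then have "card G * q ^ (K + 1) < (q - 1) * q ^ n"
    using insert.prems(2) by (meson le_less_trans mult_le_mono1)
  moreover have "\<And>B. B \<in> G \<Longrightarrow> B \<subseteq> {..<n} \<and> card B = K"
    using insert.prems(1) by blast
  ultimately obtain P where P: "\<forall>B\<in>G. \<exists>c\<in>states q n. P B \<subseteq> cylinder q n B c \<and> q ^ (K - 1) < card (P B)"
    and disj: "disjoint_family_on P G"
    using insert.IH by blast
  have A: "A \<subseteq> {..<n}" "card A = K"
    using insert.prems(1) by auto
  define U where "U = (\<Union>B\<in>G. P B)"
  have U_states: "U \<subseteq> states q n"
  proof
    fix x assume "x \<in> U"
    then obtain B c where "x \<in> P B" "P B \<subseteq> cylinder q n B c"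
      using P unfolding U_def by blast
    then show "x \<in> states q n"
      using cylinder_subset_states by blast
  qed
  have "card (P B) \<le> q ^ K" if B: "B \<in> G" for B
  proof -
    obtain c where c: "c \<in> states q n" "P B \<subseteq> cylinder q n B c"
      using bspec[OF P B] by blast
    have "card (P B) \<le> card (cylinder q n B c)"
      by (rule card_mono[OF finite_cylinder c(2)])
    also have "\<dots> = q ^ K"
      using card_cylinder[OF c(1)] insert.prems(1)[of B] B by simp
    finally show ?thesis .
  qed
  then have "card U \<le> card G * q ^ K"
    using card_UN_le[OF insert.hyps(1), of P] sum_mono[of G "\<lambda>B. card (P B)" "\<lambda>_. q ^ K"]
    unfolding U_def by simp
  then have "card U * q \<le> card G * q ^ (K + 1)"
    by (simp add: mult.assoc)
  then have "card U * q < (q - 1) * q ^ n"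
    using \<open>card G * q ^ (K + 1) < (q - 1) * q ^ n\<close> by linarith
  then obtain c where c: "c \<in> states q n" "q ^ (K - 1) < card (cylinder q n A c - U)"
    using exists_large_cylinder_part_avoiding[OF q A(1) _ U_states] A(2) K by auto
  define P' where "P' = P(A := cylinder q n A c - U)"
  have "\<forall>B\<in>insert A G. \<exists>c\<in>states q n. P' B \<subseteq> cylinder q n B c \<and> q ^ (K - 1) < card (P' B)"
    using P c insert.hyps(2) by (auto simp: P'_def)
  moreover have "disjoint_family_on P' (insert A G)"
    using disj insert.hyps(2) by (auto simp: P'_def U_def disjoint_family_on_def)
  ultimately show ?case
    by blast
qed

lemma exists_extensional_glue:
  assumes disj: "disjoint_family_on P I" and d: "d \<in> S"
    and P: "\<And>i. i \<in> I \<Longrightarrow> P i \<subseteq> S" and g: "\<And>i. i \<in> I \<Longrightarrow> g i ` P i \<subseteq> S"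
  obtains h where "h \<in> S \<rightarrow>\<^sub>E S" and "\<And>i x. i \<in> I \<Longrightarrow> x \<in> P i \<Longrightarrow> h x = g i x"
proof
  define h where "h = restrict (\<lambda>x. if \<exists>i\<in>I. x \<in> P i then g (THE i. i \<in> I \<and> x \<in> P i) x else d) S"
  have the_index: "(THE i. i \<in> I \<and> x \<in> P i) = i" if "i \<in> I" "x \<in> P i" for i x
    using that disj by (intro the_equality) (auto simp: disjoint_family_on_def)
  show "h x = g i x" if "i \<in> I" "x \<in> P i" for i x
    using that the_index P by (auto simp: h_def)
  show "h \<in> S \<rightarrow>\<^sub>E S"
    using d g the_index by (auto simp: h_def image_subset_iff)
qed

lemma exists_inj_into_zero_cylinder:
  assumes q: "q > 0" and A: "A \<subseteq> {..<n}" "2 * card A \<le> n" and P: "P \<subseteq> cylinder q n A c"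
    and c: "c \<in> states q n"
  shows "\<exists>g. g ` P \<subseteq> cylinder q n ({..<n} - A) (replicate n 0) \<and> inj_on g P"
proof -
  have "finite A"
    using A(1) finite_subset by blast
  then have card_compl: "card ({..<n} - A) = n - card A"
    using A(1) by (simp add: card_Diff_subset)
  have "card P \<le> q ^ card A"
    using card_mono[OF finite_cylinder P] card_cylinder[OF c A(1)] by simp
  also have "\<dots> \<le> q ^ (n - card A)"
    using q A(2) by (intro power_increasing) auto
  also have "\<dots> = card (cylinder q n ({..<n} - A) (replicate n 0))"
    using card_cylinder[OF replicate_zero_in_states[OF q]] card_compl by simp
  finally show ?thesis
    using card_le_inj[OF finite_subset[OF P finite_cylinder] finite_cylinder] by blast
qed

lemma exists_function_needing_extra_coordinates:
  assumes q: "q > 0" and K: "K \<ge> 1" "2 * K \<le> n"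
    and bound: "2 ^ n * q ^ (K + 1) < (q - 1) * q ^ n"
  obtains h where "h \<in> states q n \<rightarrow>\<^sub>E states q n" and "collapses_cylinders q n K h"
proof -
  define Fam where "Fam = {A. A \<subseteq> {..<n} \<and> card A = K}"
  define Z where "Z A = cylinder q n ({..<n} - A) (replicate n 0)" for A
  have Fam_Pow: "Fam \<subseteq> Pow {..<n}"
    by (auto simp: Fam_def)
  then have fin: "finite Fam"
    by (rule finite_subset) simp
  have "card Fam \<le> 2 ^ n"
    using card_mono[OF _ Fam_Pow] by (simp add: card_Pow)
  then have Fam_bound: "card Fam * q ^ (K + 1) < (q - 1) * q ^ n"
    using bound by (meson le_less_trans mult_le_mono1)
  have Fam_mem: "\<And>A. A \<in> Fam \<Longrightarrow> A \<subseteq> {..<n} \<and> card A = K"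
    by (simp add: Fam_def)
  obtain P where P: "\<forall>A\<in>Fam. \<exists>c\<in>states q n. P A \<subseteq> cylinder q n A c \<and> q ^ (K - 1) < card (P A)"
    and disj: "disjoint_family_on P Fam"
    using exists_cylinder_packing[OF q K(1) fin Fam_mem Fam_bound] by blast
  have "\<forall>A\<in>Fam. \<exists>g. g ` P A \<subseteq> Z A \<and> inj_on g (P A)"
  proof
    fix A assume A: "A \<in> Fam"
    then have "A \<subseteq> {..<n}" "2 * card A \<le> n"
      using K(2) by (auto simp: Fam_def)
    moreover obtain c where "P A \<subseteq> cylinder q n A c" "c \<in> states q n"
      using bspec[OF P A] by blast
    ultimately show "\<exists>g. g ` P A \<subseteq> Z A \<and> inj_on g (P A)"
      unfolding Z_def by (rule exists_inj_into_zero_cylinder[OF q])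
  qed
  then have "\<exists>g. \<forall>A\<in>Fam. g A ` P A \<subseteq> Z A \<and> inj_on (g A) (P A)"
    by (rule bchoice)
  then obtain g where g: "\<forall>A\<in>Fam. g A ` P A \<subseteq> Z A \<and> inj_on (g A) (P A)"
    by blast
  have P_states: "P A \<subseteq> states q n" if "A \<in> Fam" for A
    using bspec[OF P that] cylinder_subset_states by blast
  have g_states: "g A ` P A \<subseteq> states q n" if "A \<in> Fam" for A
    using bspec[OF g that] cylinder_subset_states[of q n "{..<n} - A" "replicate n 0"]
    unfolding Z_def by blast
  obtain h where h: "h \<in> states q n \<rightarrow>\<^sub>E states q n"
    and h_glue: "\<And>A x. A \<in> Fam \<Longrightarrow> x \<in> P A \<Longrightarrow> h x = g A x"
    using exists_extensional_glue[OF disj replicate_zero_in_states[OF q] P_states g_states] by blast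
  have "collapses_cylinders q n K h"
    unfolding collapses_cylinders_def
  proof (intro allI impI)
    fix A assume A: "A \<subseteq> {..<n}" "card A = K"
    then have A_Fam: "A \<in> Fam"
      by (simp add: Fam_def)
    then obtain c where c: "P A \<subseteq> cylinder q n A c" "q ^ (K - 1) < card (P A)"
      using P by blast
    have "inj_on h (P A) \<longleftrightarrow> inj_on (g A) (P A)"
      by (rule inj_on_cong) (rule h_glue[OF A_Fam])
    then have inj: "inj_on h (P A)"
      using g A_Fam by blast
    have zero: "h x ! j = 0" if x: "x \<in> P A" and j: "j \<in> A" for x j
    proof -
      have "g A x \<in> Z A"
        using g A_Fam x by blast
      then have "g A x ! j = replicate n 0 ! j"
        using j A(1) unfolding Z_def cylinder_def by blast
      then show ?thesis
        using h_glue[OF A_Fam x] j A(1) by auto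
    qed
    show "\<exists>c P. P \<subseteq> cylinder q n A c \<and> q ^ (K - 1) < card P \<and> inj_on h P \<and>
        (\<forall>x\<in>P. \<forall>y\<in>P. \<forall>j\<in>A. h x ! j = h y ! j)"
      using c inj zero by (intro exI[of _ c] exI[of _ "P A"]) simp
  qed
  with h show thesis
    by (rule that)
qed

lemma le_kappa_min:
  assumes h: "h \<in> states q n \<rightarrow> states q n"
    and lower: "\<And>k f w. sequentializes q n (n + k) f w h \<Longrightarrow> K \<le> k"
  shows "K \<le> kappa_min q n h"
proof -
  have "\<exists>f w. sequentializes q n (n + kappa_min q n h) f w h"
    unfolding kappa_min_def by (rule LeastI_ex) (use sequentializes_by_copying[OF h] in blast)
  then show ?thesis
    using lower by blast
qed

lemma kappa_min_le_kappa_min_nq: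
  "h \<in> states q n \<rightarrow>\<^sub>E states q n \<Longrightarrow> kappa_min q n h \<le> kappa_min_nq n q"
  unfolding kappa_min_nq_def by (intro Max_ge finite_imageI finite_PiE finite_states imageI)

lemma two_pow_mul_pow_mul_le_pow:
  fixes n q K :: nat
  assumes q: "q \<ge> 4" and n: "n \<ge> 1" and K: "real K \<le> real n / 2 - log q n"
  shows "2 ^ n * q ^ K * n \<le> q ^ n"
proof -
  have q1: "real q > 1"
    using q by simp
  have "real (q ^ K * n) = real q powr (real K + log q n)"
    using q1 n by (simp add: powr_add powr_realpow)
  also have "\<dots> \<le> real q powr (real n / 2)"
    using q1 K by (intro powr_mono) auto
  finally have a: "real (q ^ K * n) \<le> real q powr (real n / 2)" .
  have "real (2 ^ n) = 4 powr (real n / 2)"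
    by (simp add: powr_powr powr_realpow[symmetric] flip: powr_numeral)
  also have "\<dots> \<le> real q powr (real n / 2)"
    using q by (intro powr_mono2) auto
  finally have b: "real (2 ^ n) \<le> real q powr (real n / 2)" .
  have "real (2 ^ n * q ^ K * n) = real (2 ^ n) * real (q ^ K * n)"
    by simp
  also have "\<dots> \<le> real q powr (real n / 2) * real q powr (real n / 2)"
    using a b by (intro mult_mono) auto
  also have "\<dots> = real (q ^ n)"
    using q1 by (simp add: powr_add[symmetric] powr_realpow)
  finally show ?thesis
    by linarith
qed

lemma packing_bound_from_log:
  fixes n q K :: nat
  assumes q: "q \<ge> 4" and n: "n \<ge> 2" and K: "real K \<le> real n / 2 - log q n"
  shows "2 ^ n * q ^ (K + 1) < (q - 1) * q ^ n"
proof -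
  have "q < (q - 1) * 2"
    using q by simp
  also have "\<dots> \<le> (q - 1) * n"
    using n by simp
  finally have "q < (q - 1) * n" .
  have "2 ^ n * q ^ (K + 1) * n = q * (2 ^ n * q ^ K * n)"
    by (simp add: algebra_simps)
  also have "\<dots> \<le> q * q ^ n"
    using two_pow_mul_pow_mul_le_pow[OF q _ K] n by simp
  also have "\<dots> < (q - 1) * n * q ^ n"
    using \<open>q < (q - 1) * n\<close> q by (intro mult_less_mono1) simp_all
  also have "\<dots> = (q - 1) * q ^ n * n"
    by (simp only: mult_ac)
  finally show ?thesis
    by (meson mult_less_cancel2)
qed

lemma le_kappa_min_nq:
  assumes q: "q > 0" and K: "K \<ge> 1" "2 * K \<le> n"
    and bound: "2 ^ n * q ^ (K + 1) < (q - 1) * q ^ n"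
  shows "K \<le> kappa_min_nq n q"
proof -
  obtain h where h: "h \<in> states q n \<rightarrow>\<^sub>E states q n" and hard: "collapses_cylinders q n K h"
    using exists_function_needing_extra_coordinates[OF q K bound] by blast
  have "K \<le> kappa_min q n h"
  proof (rule le_kappa_min)
    show "h \<in> states q n \<rightarrow> states q n"
      using h by (simp add: PiE_def)
    show "K \<le> k" if "sequentializes q n (n + k) f w h" for k f w
      using K(2) by (intro extra_coordinates_lower_bound[OF q _ hard that]) simp
  qed
  also have "\<dots> \<le> kappa_min_nq n q"
    using h by (rule kappa_min_le_kappa_min_nq)
  finally show ?thesis .
qed

theorem mainTheorem6:
  fixes n q :: nat
  assumes "q \<ge> 4" and "n \<ge> 1"
  shows "\<lfloor>real n / 2 - log (real q) (real n)\<rfloor> \<le> int (kappa_min_nq n q)"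
proof (cases "\<lfloor>real n / 2 - log (real q) (real n)\<rfloor> \<le> 0")
  case False
  define K where "K = nat \<lfloor>real n / 2 - log (real q) (real n)\<rfloor>"
  have K_floor: "int K = \<lfloor>real n / 2 - log (real q) (real n)\<rfloor>"
    using False by (simp add: K_def)
  then have "K \<ge> 1"
    using False by linarith
  from K_floor have K_le: "real K \<le> real n / 2 - log q n"
    by (metis of_int_floor_le of_int_of_nat_eq)
  moreover have "log q n \<ge> 0"
    using assms by simp
  ultimately have "2 * K \<le> n"
    by linarith
  then have "K \<le> kappa_min_nq n q"
    using assms \<open>K \<ge> 1\<close> K_le by (intro le_kappa_min_nq packing_bound_from_log) auto
  then show ?thesis
    using K_floor by linarith
qed linarith

end
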